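(* Let $\mathcal{A}$ be a non-unital Banach algebra. Then every approximately right invertible element $x\in\mathcal{A}$ is a left topological divisor of zero, i.e. $\inf\{\|xy\| : y\in\mathcal{A},\ \|y\|=1\}=0$.
   Context: An approximate identity in $\mathcal{A}$ is a net $(e_j)_{j\in J}$ with $\lim_j e_jy=\lim_j ye_j=y$ for all $y\in\mathcal{A}$. An element $x$ is approximately right invertible if there is a net $(r_j)$ in $\mathcal{A}$ such that $(xr_j)$ is an approximate identity in $\mathcal{A}$. *)

theory Defs
  imports "HOL-Analysis.Analysis"
begin

definition directed :: "('j \<Rightarrow> 'j \<Rightarrow> bool) \<Rightarrow> bool" where
  "directed le \<longleftrightarrow> (\<forall>i. le i i) \<and> (\<forall>i j k. le i j \<longrightarrow> le j k \<longrightarrow> le i k)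
     \<and> (\<forall>i j. \<exists>k. le i k \<and> le j k)"

definition net_tendsto :: "('j \<Rightarrow> 'j \<Rightarrow> bool) \<Rightarrow> ('j \<Rightarrow> 'a::metric_space) \<Rightarrow> 'a \<Rightarrow> bool" where
  "net_tendsto le f l \<longleftrightarrow> (\<forall>\<epsilon>>0. \<exists>i0. \<forall>i. le i0 i \<longrightarrow> dist (f i) l < \<epsilon>)"

definition approx_identity :: "('j \<Rightarrow> 'j \<Rightarrow> bool) \<Rightarrow> ('j \<Rightarrow> 'a::real_normed_algebra) \<Rightarrow> bool" where
  "approx_identity le e \<longleftrightarrow>
     (\<forall>y. net_tendsto le (\<lambda>j. e j * y) y \<and> net_tendsto le (\<lambda>j. y * e j) y)"

definition approx_right_invertible_via ::
  "('j \<Rightarrow> 'j \<Rightarrow> bool) \<Rightarrow> ('j \<Rightarrow> 'a::real_normed_algebra) \<Rightarrow> 'a \<Rightarrow> bool" where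
  "approx_right_invertible_via le r x \<longleftrightarrow> directed le \<and> approx_identity le (\<lambda>j. x * r j)"

definition non_unital :: "'a::real_normed_algebra itself \<Rightarrow> bool" where
  "non_unital _ \<longleftrightarrow> \<not> (\<exists>e::'a. \<forall>y. e * y = y \<and> y * e = y)"

definition left_top_divisor_of_zero :: "'a::real_normed_algebra \<Rightarrow> bool" where
  "left_top_divisor_of_zero x \<longleftrightarrow> Inf {norm (x * y) | y. norm y = 1} = 0"

end

theory Submission
  imports Defs
begin

(* If x were not a left topological divisor of zero, left multiplication by x would be
   bounded below, c \<parallel>y\<parallel> \<le> \<parallel>x y\<parallel> with c > 0. Since x r_j x tends to x, this makes the net
   r_j x Cauchy, so by completeness it converges to some u. Bounding below again,
   x r_j x y \<rightarrow> x y gives u y = y; then y u (x r_j) = y (x r_j) shows y u = y in the limit.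
   So u is a unit, contradicting non-unitality. *)

definition net_filter :: "('j \<Rightarrow> 'j \<Rightarrow> bool) \<Rightarrow> 'j filter" where
  "net_filter le = (INF i. principal {k. le i k})"

lemma eventually_net_filter:
  fixes le :: "'j \<Rightarrow> 'j \<Rightarrow> bool"
  assumes "directed le"
  shows "eventually P (net_filter le) \<longleftrightarrow> (\<exists>i. \<forall>k. le i k \<longrightarrow> P k)"
proof -
  have "eventually P (INF i. principal {k. le i k})
      \<longleftrightarrow> (\<exists>i\<in>UNIV. eventually P (principal {k. le i k}))"
  proof (rule eventually_INF_base)
    fix a b :: 'j
    obtain k where "le a k" "le b k" using assms unfolding directed_def by blast
    then show "\<exists>k\<in>UNIV. principal {j. le k j} \<le> inf (principal {j. le a j}) (principal {j. le b j})"
      using assms unfolding directed_def by (intro bexI[of _ k]) auto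
  qed simp
  then show ?thesis by (simp add: net_filter_def eventually_principal)
qed

lemma net_filter_neq_bot:
  assumes "directed le"
  shows "net_filter le \<noteq> bot"
proof
  assume "net_filter le = bot"
  then have "eventually (\<lambda>_. False) (net_filter le)" by simp
  then show False using assms by (auto simp: eventually_net_filter directed_def)
qed

lemma net_tendsto_iff_tendsto:
  assumes "directed le"
  shows "net_tendsto le f l \<longleftrightarrow> (f \<longlongrightarrow> l) (net_filter le)"
  by (simp add: net_tendsto_def tendsto_iff eventually_net_filter[OF assms])

lemma non_unital_imp_nontrivial:
  assumes "non_unital TYPE('a::real_normed_algebra)"
  obtains y :: "'a::real_normed_algebra" where "y \<noteq> 0"
  using assms unfolding non_unital_def by (metis mult_zero_left)

lemma not_left_top_divisor_of_zero_imp_bounded_below: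
  fixes x y0 :: "'a::real_normed_algebra"
  assumes "\<not> left_top_divisor_of_zero x" and "y0 \<noteq> 0"
  obtains c where "c > 0" and "\<And>y. c * norm y \<le> norm (x * y)"
proof -
  define S where "S = {norm (x * y) | y. norm y = 1}"
  have "norm (scaleR (1 / norm y0) y0) = 1" using assms(2) by simp
  then have "S \<noteq> {}" unfolding S_def by blast
  have bdd: "bdd_below S" unfolding S_def by (rule bdd_belowI[of _ 0]) auto
  have "Inf S \<ge> 0" using \<open>S \<noteq> {}\<close> unfolding S_def by (auto intro!: cInf_greatest)
  moreover have "Inf S \<noteq> 0" using assms(1) by (simp add: left_top_divisor_of_zero_def S_def)
  ultimately have "Inf S > 0" by simp
  moreover have "Inf S * norm y \<le> norm (x * y)" for y
  proof (cases "y = 0")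
    case False
    have "norm (scaleR (1 / norm y) y) = 1" using False by simp
    then have "norm (x * scaleR (1 / norm y) y) \<in> S" unfolding S_def by blast
    then have "Inf S \<le> norm (x * scaleR (1 / norm y) y)" using bdd by (rule cInf_lower)
    also have "\<dots> = norm (x * y) / norm y" by (simp add: mult_scaleR_right)
    finally show ?thesis using False by (simp add: field_simps)
  qed simp
  ultimately show thesis by (rule that)
qed

lemma left_unit_of_bounded_below_with_left_approx_inverse:
  fixes x :: "'a::{real_normed_algebra, banach}"
  assumes "F \<noteq> bot" and "c > 0" and below: "\<And>y. c * norm y \<le> norm (x * y)"
    and approx: "\<And>y. ((\<lambda>j. x * r j * y) \<longlongrightarrow> y) F"
  shows "\<exists>u::'a. \<forall>y. u * y = y"
proof -
  have cauchy: "cauchy_filter (filtermap (\<lambda>j. r j * x) F)"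
    unfolding cauchy_filter_metric_filtermap
  proof (intro allI impI)
    fix \<epsilon> :: real
    assume "\<epsilon> > 0"
    then have "c * \<epsilon> / 2 > 0" using \<open>c > 0\<close> by simp
    then have "eventually (\<lambda>j. dist (x * r j * x) x < c * \<epsilon> / 2) F"
      using tendstoD[OF approx[of x]] by blast
    moreover have "dist (r i * x) (r k * x) < \<epsilon>"
      if "dist (x * r i * x) x < c * \<epsilon> / 2" "dist (x * r k * x) x < c * \<epsilon> / 2" for i k
    proof -
      have "c * norm (r i * x - r k * x) \<le> norm (x * (r i * x - r k * x))" by (rule below)
      also have "\<dots> = norm ((x * r i * x - x) - (x * r k * x - x))"
        by (simp add: algebra_simps mult.assoc)
      also have "\<dots> \<le> norm (x * r i * x - x) + norm (x * r k * x - x)"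
        by (rule norm_triangle_ineq4)
      also have "\<dots> < c * \<epsilon>" using that by (simp add: dist_norm)
      finally show ?thesis using \<open>c > 0\<close> by (simp add: dist_norm)
    qed
    ultimately show "\<exists>P. eventually P F \<and> (\<forall>i k. P i \<and> P k \<longrightarrow> dist (r i * x) (r k * x) < \<epsilon>)"
      by blast
  qed
  then have "convergent_filter (filtermap (\<lambda>j. r j * x) F)" by (rule cauchy_filter_convergent)
  then obtain u where u: "((\<lambda>j. r j * x) \<longlongrightarrow> u) F"
    by (auto simp: convergent_filter_iff filterlim_def)
  have "u * y = y" for y
  proof -
    have "((\<lambda>j. r j * x * y - y) \<longlongrightarrow> 0) F"
    proof (rule Lim_null_comparison)
      show "eventually (\<lambda>j. norm (r j * x * y - y) \<le> norm (x * r j * (x * y) - x * y) / c) F"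
      proof (intro always_eventually allI)
        fix j
        have "c * norm (r j * x * y - y) \<le> norm (x * (r j * x * y - y))" by (rule below)
        also have "\<dots> = norm (x * r j * (x * y) - x * y)" by (simp add: algebra_simps mult.assoc)
        finally show "norm (r j * x * y - y) \<le> norm (x * r j * (x * y) - x * y) / c"
          using \<open>c > 0\<close> by (simp add: field_simps)
      qed
      have "((\<lambda>j. x * r j * (x * y) - x * y) \<longlongrightarrow> 0) F"
        using approx[of "x * y"] by (simp add: Lim_null[symmetric])
      then show "((\<lambda>j. norm (x * r j * (x * y) - x * y) / c) \<longlongrightarrow> 0) F"
        by (simp add: tendsto_norm_zero_iff tendsto_divide_zero)
    qed
    then have "((\<lambda>j. r j * x * y) \<longlongrightarrow> y) F" by (simp add: Lim_null[symmetric])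
    moreover have "((\<lambda>j. r j * x * y) \<longlongrightarrow> u * y) F" by (intro tendsto_intros u)
    ultimately show ?thesis by (rule tendsto_unique[OF \<open>F \<noteq> bot\<close>, symmetric])
  qed
  then show ?thesis by blast
qed

lemma right_unit_of_left_unit_and_right_approx_unit:
  fixes u :: "'a::real_normed_algebra" and e :: "'j \<Rightarrow> 'a"
  assumes "F \<noteq> bot" and "\<And>y. u * y = y" and "\<And>y. ((\<lambda>j. y * e j) \<longlongrightarrow> y) F"
  shows "y * u = y"
proof -
  have "(y * u) * e j = y * e j" for j by (simp add: assms(2) mult.assoc)
  then have "((\<lambda>j. (y * u) * e j) \<longlongrightarrow> y) F" using assms(3)[of y] by simp
  with assms(3)[of "y * u"] show ?thesis by (rule tendsto_unique[OF assms(1)])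
qed

theorem proposition2p22:
  fixes x :: "'a::{real_normed_algebra, banach}"
    and le :: "'j \<Rightarrow> 'j \<Rightarrow> bool" and r :: "'j \<Rightarrow> 'a"
  assumes "non_unital TYPE('a)"
    and "approx_right_invertible_via le r x"
  shows "left_top_divisor_of_zero x"
proof (rule ccontr)
  assume not_divisor: "\<not> left_top_divisor_of_zero x"
  have dir: "directed le" and ai: "approx_identity le (\<lambda>j. x * r j)"
    using assms(2) by (simp_all add: approx_right_invertible_via_def)
  let ?F = "net_filter le"
  have F: "?F \<noteq> bot" using net_filter_neq_bot[OF dir] .
  have left: "((\<lambda>j. x * r j * y) \<longlongrightarrow> y) ?F"
    and right: "((\<lambda>j. y * (x * r j)) \<longlongrightarrow> y) ?F" for y
    using ai unfolding approx_identity_def net_tendsto_iff_tendsto[OF dir] by blast+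
  obtain y0 :: 'a where "y0 \<noteq> 0" using non_unital_imp_nontrivial[OF assms(1)] .
  then obtain c where c: "c > 0" and below: "\<And>y. c * norm y \<le> norm (x * y)"
    using not_left_top_divisor_of_zero_imp_bounded_below[OF not_divisor] by blast
  obtain u :: 'a where "\<forall>y. u * y = y"
    using left_unit_of_bounded_below_with_left_approx_inverse[OF F c below left] ..
  then have u: "u * y = y" for y by blast
  have "y * u = y" for y
    using right_unit_of_left_unit_and_right_approx_unit[OF F u right] .
  then show False using u assms(1) unfolding non_unital_def by blast
qed

end
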